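(* Let $t,n\in\mathbb N$ and $\alpha_1,\alpha_2,\tau\geq 0$. Let $\mathcal H$ be an $n$-vertex hypergraph with codegree at most $t$ such that every edge has size at least $2(1+\alpha_2)^2$. Let $e\in\mathcal H$, $r:=|V(e)|$, $m_1:=|\{f\in N(e): |V(f)|\geq(1+\alpha_1)r\}|$ and $m_2:=|\{f\in N(e): (1+\alpha_1)r>|V(f)|\geq r/(1+\alpha_2)\}|$. Then (i) $(1+\alpha_1)m_1+\frac{m_2}{1+\alpha_2}\leq tn\left(1+\frac{1+\alpha_2}{r-1-\alpha_2}\right)$. Moreover, if $m_1+m_2\geq t(1-\tau)n$ and $\alpha_1>0$, then (ii) $m_1\leq\left(\tau+\frac{1+\alpha_2+\alpha_2 r}{r-1-\alpha_2}\right)\frac{tn}{\alpha_1}$.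
   Context: A hypergraph $\mathcal H$ has a finite vertex set $V(\mathcal H)$ and a finite set of edges, each edge $e$ with a nonempty set $V(e)\subseteq V(\mathcal H)$ (multiple edges allowed); $n$-vertex means $|V(\mathcal H)|=n$, and the size of $e$ is $|V(e)|$. The codegree of $\mathcal H$ is the maximum over distinct vertices $u,v$ of the number of edges containing both. $N(e)$ is the set of edges $f\neq e$ with $V(e)\cap V(f)\neq\emptyset$. *)

theory Defs
  imports Main Complex_Main
begin

text \<open>A hypergraph: finite vertex set V, finite set of edge labels E (so multiple
edges with the same vertex set are allowed), and vertex map vs giving V(e).\<close>

definition hypergraph :: "'v set \<Rightarrow> 'e set \<Rightarrow> ('e \<Rightarrow> 'v set) \<Rightarrow> bool" where
  "hypergraph V E vs \<longleftrightarrow> finite V \<and> finite E \<and>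
     (\<forall>e\<in>E. vs e \<noteq> {} \<and> vs e \<subseteq> V)"

definition codegree :: "'v set \<Rightarrow> 'e set \<Rightarrow> ('e \<Rightarrow> 'v set) \<Rightarrow> nat" where
  "codegree V E vs =
     Sup ({card {e\<in>E. u \<in> vs e \<and> v \<in> vs e} | u v. u \<in> V \<and> v \<in> V \<and> u \<noteq> v} \<union> {0})"

definition nbhd :: "'e set \<Rightarrow> ('e \<Rightarrow> 'v set) \<Rightarrow> 'e \<Rightarrow> 'e set" where
  "nbhd E vs e = {f\<in>E. f \<noteq> e \<and> vs e \<inter> vs f \<noteq> {}}"

end

theory Submission imports Defs begin

text \<open>Double counting: every neighbour \<open>f\<close> of \<open>e\<close> contains some \<open>u \<in> e\<close> together with
  \<open>|f| - 1\<close> further vertices \<open>v\<close>, while each of the at most \<open>r (n - 1)\<close> pairs \<open>(u, v)\<close>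
  with \<open>u \<in> e\<close> lies in at most \<open>t\<close> edges; hence \<open>\<Sum>\<^sub>f (|f| - 1) \<le> t r n\<close> over \<open>N(e)\<close>.
  Every neighbour counted in \<open>m\<^sub>1\<close> or \<open>m\<^sub>2\<close> has size at least \<open>r / (1 + \<alpha>\<^sub>2)\<close>, so
  \<open>|f| \<le> (1 + \<delta>) (|f| - 1)\<close> with \<open>\<delta> = (1 + \<alpha>\<^sub>2) / (r - 1 - \<alpha>\<^sub>2)\<close>, and it contributes at least
  \<open>(1 + \<alpha>\<^sub>1) r\<close> resp. \<open>r / (1 + \<alpha>\<^sub>2)\<close> to \<open>\<Sum>\<^sub>f |f|\<close>; dividing by \<open>r\<close> gives (i).
  Part (ii) is (i) rearranged using \<open>m\<^sub>1 + m\<^sub>2 \<ge> t (1 - \<tau>) n\<close>.\<close>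

lemma card_edges_containing_pair_le_codegree:
  assumes "finite E" "u \<in> V" "v \<in> V" "u \<noteq> v"
  shows "card {f\<in>E. u \<in> vs f \<and> v \<in> vs f} \<le> codegree V E vs"
proof -
  let ?S = "{card {e\<in>E. u \<in> vs e \<and> v \<in> vs e} | u v. u \<in> V \<and> v \<in> V \<and> u \<noteq> v} \<union> {0}"
  have "bdd_above ?S"
    by (rule bdd_aboveI[where M = "card E"]) (auto intro!: card_mono assms(1))
  moreover have "card {f\<in>E. u \<in> vs f \<and> v \<in> vs f} \<in> ?S"
    using assms by blast
  ultimately show ?thesis
    unfolding codegree_def by (rule cSup_upper[rotated])
qed

lemma nbhd_subset: "nbhd E vs e \<subseteq> E"
  unfolding nbhd_def by auto

lemma card_edge_pos:
  assumes "hypergraph V E vs" "f \<in> E"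
  shows "card (vs f) > 0"
proof -
  have "finite (vs f)" "vs f \<noteq> {}"
    using assms finite_subset unfolding hypergraph_def by blast+
  then show ?thesis
    by (simp add: card_gt_0_iff)
qed

lemma sum_pair_indicator_eq_card_minus_one:
  assumes "finite V" "A \<subseteq> V" "u \<in> A"
  shows "(\<Sum>v\<in>V - {u}. if u \<in> A \<and> v \<in> A then 1 else 0) = card A - 1"
proof -
  have "(\<Sum>v\<in>V - {u}. if u \<in> A \<and> v \<in> A then 1 else 0) = card ((V - {u}) \<inter> A)"
    using assms by (simp add: sum.If_cases)
  also have "(V - {u}) \<inter> A = A - {u}"
    using assms(2) by blast
  finally show ?thesis
    using assms(3) by simp
qed

lemma sum_nbhd_card_minus_one_le:
  assumes H: "hypergraph V E vs" and "e \<in> E"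
  shows "(\<Sum>f\<in>nbhd E vs e. card (vs f) - 1) \<le> codegree V E vs * card (vs e) * (card V - 1)"
proof -
  let ?N = "nbhd E vs e"
  let ?I = "\<lambda>f u v. if u \<in> vs f \<and> v \<in> vs f then 1 else 0 :: nat"
  have fV: "finite V" and fE: "finite E" and sub: "\<And>f. f \<in> E \<Longrightarrow> vs f \<subseteq> V"
    using H unfolding hypergraph_def by auto
  have NE: "?N \<subseteq> E"
    by (rule nbhd_subset)
  have fN: "finite ?N"
    using NE fE finite_subset by blast
  have fe: "finite (vs e)"
    using sub[OF \<open>e \<in> E\<close>] fV finite_subset by blast
  have neighbour: "card (vs f) - 1 \<le> (\<Sum>u\<in>vs e. \<Sum>v\<in>V - {u}. ?I f u v)" if f: "f \<in> ?N" for f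
  proof -
    obtain u0 where u0: "u0 \<in> vs e" "u0 \<in> vs f"
      using f unfolding nbhd_def by auto
    have "card (vs f) - 1 = (\<Sum>v\<in>V - {u0}. ?I f u0 v)"
      using sum_pair_indicator_eq_card_minus_one[OF fV _ u0(2)] f NE sub by auto
    also have "\<dots> \<le> (\<Sum>u\<in>vs e. \<Sum>v\<in>V - {u}. ?I f u v)"
      by (rule member_le_sum[OF u0(1) _ fe]) auto
    finally show ?thesis .
  qed
  have pair: "(\<Sum>f\<in>?N. ?I f u v) \<le> codegree V E vs" if "u \<in> vs e" "v \<in> V - {u}" for u v
  proof -
    have "(\<Sum>f\<in>?N. ?I f u v) = card {f\<in>?N. u \<in> vs f \<and> v \<in> vs f}"
      using fN by (simp add: sum.If_cases Int_def conj_commute)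
    also have "\<dots> \<le> card {f\<in>E. u \<in> vs f \<and> v \<in> vs f}"
      using NE fE by (intro card_mono) auto
    also have "\<dots> \<le> codegree V E vs"
      using card_edges_containing_pair_le_codegree[OF fE, of u V v vs] that sub[OF \<open>e \<in> E\<close>] by auto
    finally show ?thesis .
  qed
  have "(\<Sum>f\<in>?N. card (vs f) - 1) \<le> (\<Sum>f\<in>?N. \<Sum>u\<in>vs e. \<Sum>v\<in>V - {u}. ?I f u v)"
    using neighbour by (rule sum_mono)
  also have "\<dots> = (\<Sum>u\<in>vs e. \<Sum>v\<in>V - {u}. \<Sum>f\<in>?N. ?I f u v)"
    by (subst sum.swap) (intro sum.cong refl sum.swap)
  also have "\<dots> \<le> (\<Sum>u\<in>vs e. \<Sum>v\<in>V - {u}. codegree V E vs)"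
    using pair by (intro sum_mono)
  also have "\<dots> = codegree V E vs * card (vs e) * (card V - 1)"
    using sub[OF \<open>e \<in> E\<close>] fV by (simp add: subset_iff)
  finally show ?thesis .
qed

lemma sum_nbhd_real_card_minus_one_le:
  assumes H: "hypergraph V E vs" and "e \<in> E"
  shows "(\<Sum>f\<in>nbhd E vs e. real (card (vs f)) - 1) \<le> codegree V E vs * real (card (vs e)) * card V"
proof -
  have "(\<Sum>f\<in>nbhd E vs e. real (card (vs f)) - 1) = real (\<Sum>f\<in>nbhd E vs e. card (vs f) - 1)"
    using card_edge_pos[OF H] nbhd_subset[of E vs e] unfolding of_nat_sum
    by (intro sum.cong refl) (auto simp: of_nat_diff Suc_le_eq subset_iff)
  also have "\<dots> \<le> real (codegree V E vs * card (vs e) * (card V - 1))"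
    using sum_nbhd_card_minus_one_le[OF assms] by linarith
  also have "\<dots> \<le> codegree V E vs * real (card (vs e)) * card V"
    by (simp add: of_nat_diff mult_left_mono)
  finally show ?thesis .
qed

lemma le_mult_pred_of_large:
  fixes s r a :: real
  assumes "r - 1 - a > 0" and "r \<le> (1 + a) * s"
  shows "s \<le> (1 + (1 + a) / (r - 1 - a)) * (s - 1)"
proof -
  have "r - 1 - a \<le> (1 + a) * (s - 1)"
    using assms(2) by (simp add: algebra_simps)
  then have "1 \<le> (1 + a) / (r - 1 - a) * (s - 1)"
    using assms(1) by (simp add: field_simps)
  then show ?thesis
    by (simp add: algebra_simps)
qed

lemma weighted_nbhd_count_le:
  fixes \<alpha>1 \<alpha>2 :: real
  assumes H: "hypergraph V E vs" and "e \<in> E" and "\<alpha>1 \<ge> 0" and "\<alpha>2 \<ge> 0"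
    and r_large: "real (card (vs e)) - 1 - \<alpha>2 > 0"
  defines "M1 \<equiv> {f \<in> nbhd E vs e. real (card (vs f)) \<ge> (1 + \<alpha>1) * real (card (vs e))}"
    and "M2 \<equiv> {f \<in> nbhd E vs e. (1 + \<alpha>1) * real (card (vs e)) > real (card (vs f)) \<and>
                                    real (card (vs f)) \<ge> real (card (vs e)) / (1 + \<alpha>2)}"
  shows "(1 + \<alpha>1) * card M1 + card M2 / (1 + \<alpha>2)
           \<le> real (codegree V E vs) * real (card V) * (1 + (1 + \<alpha>2) / (real (card (vs e)) - 1 - \<alpha>2))"
proof -
  define r where "r = real (card (vs e))"
  define \<delta> where "\<delta> = (1 + \<alpha>2) / (r - 1 - \<alpha>2)"
  define d where "d f = real (card (vs f))" for f
  have rpos: "r - 1 - \<alpha>2 > 0" and "r > 0" and "\<delta> \<ge> 0"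
    using r_large \<open>\<alpha>2 \<ge> 0\<close> unfolding r_def \<delta>_def by auto
  have fN: "finite (nbhd E vs e)"
    using H nbhd_subset[of E vs e] finite_subset unfolding hypergraph_def by blast
  have M12N: "M1 \<union> M2 \<subseteq> nbhd E vs e" and disj: "M1 \<inter> M2 = {}"
    unfolding M1_def M2_def by auto
  have fM1: "finite M1" and fM2: "finite M2"
    using M12N fN finite_subset by auto
  have d_ge_1: "d f \<ge> 1" if "f \<in> nbhd E vs e" for f
    using card_edge_pos[OF H] nbhd_subset[of E vs e] that unfolding d_def by (auto simp: Suc_le_eq)
  have M1_weight: "(1 + \<alpha>1) * r \<le> (1 + \<delta>) * (d f - 1)" if "f \<in> M1" for f
  proof -
    have "(1 + \<alpha>1) * r \<le> d f"
      using that unfolding M1_def d_def r_def by auto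
    moreover have "r \<le> (1 + \<alpha>1) * r" "d f \<le> (1 + \<alpha>2) * d f"
      using \<open>\<alpha>1 \<ge> 0\<close> \<open>\<alpha>2 \<ge> 0\<close> \<open>r > 0\<close> unfolding d_def by (simp_all add: algebra_simps)
    ultimately show ?thesis
      using le_mult_pred_of_large[OF rpos, of "d f"] unfolding \<delta>_def by linarith
  qed
  have M2_weight: "r / (1 + \<alpha>2) \<le> (1 + \<delta>) * (d f - 1)" if "f \<in> M2" for f
  proof -
    have "r / (1 + \<alpha>2) \<le> d f"
      using that unfolding M2_def d_def r_def by auto
    moreover have "r \<le> (1 + \<alpha>2) * d f"
      using calculation \<open>\<alpha>2 \<ge> 0\<close> by (simp add: field_simps)
    ultimately show ?thesis
      using le_mult_pred_of_large[OF rpos, of "d f"] unfolding \<delta>_def by linarith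
  qed
  have "r * ((1 + \<alpha>1) * card M1 + card M2 / (1 + \<alpha>2))
          = (\<Sum>f\<in>M1. (1 + \<alpha>1) * r) + (\<Sum>f\<in>M2. r / (1 + \<alpha>2))"
    by (simp add: algebra_simps)
  also have "\<dots> \<le> (\<Sum>f\<in>M1. (1 + \<delta>) * (d f - 1)) + (\<Sum>f\<in>M2. (1 + \<delta>) * (d f - 1))"
    using M1_weight M2_weight by (intro add_mono sum_mono)
  also have "\<dots> = (1 + \<delta>) * (\<Sum>f\<in>M1 \<union> M2. d f - 1)"
    using fM1 fM2 disj by (simp add: sum.union_disjoint sum_distrib_left distrib_left)
  also have "\<dots> \<le> (1 + \<delta>) * (\<Sum>f\<in>nbhd E vs e. d f - 1)"
    using M12N fN d_ge_1 \<open>\<delta> \<ge> 0\<close> by (intro mult_left_mono sum_mono2) auto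
  also have "\<dots> \<le> (1 + \<delta>) * (codegree V E vs * r * card V)"
    using sum_nbhd_real_card_minus_one_le[OF H \<open>e \<in> E\<close>] \<open>\<delta> \<ge> 0\<close>
    unfolding d_def r_def by (intro mult_left_mono) auto
  also have "\<dots> = r * (codegree V E vs * card V * (1 + \<delta>))"
    by (simp add: algebra_simps)
  finally show ?thesis
    using \<open>r > 0\<close> unfolding \<delta>_def r_def by (simp add: mult_le_cancel_left_pos)
qed

lemma bound_from_weighted_count:
  fixes m1 m2 a1 a2 \<tau> T r :: real
  assumes "(1 + a1) * m1 + m2 / (1 + a2) \<le> T * (1 + (1 + a2) / (r - 1 - a2))"
    and "m1 \<ge> 0" "m2 \<ge> 0" "a1 > 0" "a2 \<ge> 0" "r - 1 - a2 > 0"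
    and "m1 + m2 \<ge> T * (1 - \<tau>)"
  shows "m1 \<le> (\<tau> + (1 + a2 + a2 * r) / (r - 1 - a2)) * T / a1"
proof -
  define B where "B = T * (1 + (1 + a2) / (r - 1 - a2))"
  \<comment> \<open>write \<open>m2 / (1 + a2) = m2 - a2 * (m2 / (1 + a2))\<close> and bound the subtracted term by \<open>a2 * B\<close>\<close>
  have "m2 / (1 + a2) \<le> B"
    using assms(1-4) unfolding B_def by (smt (verit) mult_nonneg_nonneg)
  then have "a2 * (m2 / (1 + a2)) \<le> a2 * B"
    using assms(5) by (rule mult_left_mono)
  moreover have "a1 * m1 + (m1 + m2) - a2 * (m2 / (1 + a2)) \<le> B"
    using assms(1,5) unfolding B_def by (simp add: field_simps)
  ultimately have "a1 * m1 \<le> (1 + a2) * B - T + T * \<tau>"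
    using assms(7) by (simp add: algebra_simps)
  also have "\<dots> = (\<tau> + (1 + a2 + a2 * r) / (r - 1 - a2)) * T"
    using assms(6) unfolding B_def by (simp add: field_simps)
  finally show ?thesis
    using assms(4) by (simp add: field_simps mult.commute)
qed

theorem proposition3p6:
  fixes V :: "'v set" and E :: "'e set" and vs :: "'e \<Rightarrow> 'v set"
    and t n :: nat and \<alpha>1 \<alpha>2 \<tau> :: real and e :: 'e
  assumes "hypergraph V E vs"
    and "card V = n"
    and "codegree V E vs \<le> t"
    and "\<alpha>1 \<ge> 0" and "\<alpha>2 \<ge> 0" and "\<tau> \<ge> 0"
    and "\<forall>f\<in>E. real (card (vs f)) \<ge> 2 * (1 + \<alpha>2)^2"
    and "e \<in> E"
  defines "r \<equiv> card (vs e)"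
    and "m1 \<equiv> card {f \<in> nbhd E vs e. real (card (vs f)) \<ge> (1 + \<alpha>1) * real (card (vs e))}"
    and "m2 \<equiv> card {f \<in> nbhd E vs e. (1 + \<alpha>1) * real (card (vs e)) > real (card (vs f)) \<and>
                                       real (card (vs f)) \<ge> real (card (vs e)) / (1 + \<alpha>2)}"
  shows "((1 + \<alpha>1) * real m1 + real m2 / (1 + \<alpha>2)
           \<le> real t * real n * (1 + (1 + \<alpha>2) / (real r - 1 - \<alpha>2))) \<and>
         (real m1 + real m2 \<ge> real t * (1 - \<tau>) * real n \<longrightarrow> \<alpha>1 > 0 \<longrightarrow>
           real m1 \<le> (\<tau> + (1 + \<alpha>2 + \<alpha>2 * real r) / (real r - 1 - \<alpha>2)) * real t * real n / \<alpha>1)"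
proof -
  have "(1 + \<alpha>2) ^ 2 \<ge> 1 + \<alpha>2"
    using \<open>\<alpha>2 \<ge> 0\<close> by (simp add: power2_eq_square)
  then have r_large: "real r - 1 - \<alpha>2 > 0"
    using assms(5,7,8) unfolding r_def by force
  have "real (codegree V E vs) * real n * (1 + (1 + \<alpha>2) / (real r - 1 - \<alpha>2))
          \<le> real t * real n * (1 + (1 + \<alpha>2) / (real r - 1 - \<alpha>2))"
    using assms(3,5) r_large by (intro mult_right_mono) auto
  with weighted_nbhd_count_le[OF assms(1,8,4,5)] r_large assms(2)
  have part_i: "(1 + \<alpha>1) * real m1 + real m2 / (1 + \<alpha>2)
                  \<le> real t * real n * (1 + (1 + \<alpha>2) / (real r - 1 - \<alpha>2))"
    unfolding m1_def m2_def r_def by auto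
  moreover have "real m1 \<le> (\<tau> + (1 + \<alpha>2 + \<alpha>2 * real r) / (real r - 1 - \<alpha>2)) * real t * real n / \<alpha>1"
    if "real m1 + real m2 \<ge> real t * (1 - \<tau>) * real n" and "\<alpha>1 > 0"
    using bound_from_weighted_count[OF part_i _ _ \<open>\<alpha>1 > 0\<close> \<open>\<alpha>2 \<ge> 0\<close> r_large] that
    by (simp add: algebra_simps)
  ultimately show ?thesis
    by blast
qed

end
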